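(* Let $X$ be a separable Banach space, let $T$ be a bounded linear operator on $X$ and let $\varepsilon\in(0,1)$. Let $\mathcal{D}_1$ be a dense subset of $X$. Let $\mathcal{D}_2$ be a countable subset of $X$ with a fixed enumeration $\mathcal{D}_2=\{y_k:k\in\mathbb{N}\}$. Assume that for each $x\in X\setminus\{0\}$ there are infinitely many integers $k\in\mathbb{N}$ such that $y_k\in B(x,\varepsilon\|x\|)$. Let $(n(k))_k\subset\mathbb{N}$ be an increasing sequence and let $S_{n(k)}:\mathcal{D}_2\to X$ be a sequence of maps such that: (1) $\lim_{k\to\infty}\|T^{n(k)}x\|=0$ for all $x\in\mathcal{D}_1$; (2) $\lim_{k\to\infty}\|S_{n(k)}y_k\|=0$; (3) $\lim_{k\to\infty}\|T^{n(k)}S_{n(k)}y_k-y_k\|=0$. Then $T$ is $\delta$-hypercyclic for every $\delta>\varepsilon$.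
   Context: $B(x,r)$ denotes the closed ball of center $x$ and radius $r$. For $\delta>0$, a bounded linear operator $T$ on a Banach space $X$ is called $\delta$-hypercyclic if there exists a vector $x\in X$ such that for every $y\in X\setminus\{0\}$ there exists $n\in\mathbb{N}$ with $\|T^nx-y\|\le\delta\|y\|$. *)

theory Defs
  imports "HOL-Analysis.Analysis"
begin

definition delta_hypercyclic :: "real \<Rightarrow> ('a::real_normed_vector \<Rightarrow> 'a) \<Rightarrow> bool" where
  "delta_hypercyclic \<delta> T \<longleftrightarrow>
     (\<exists>x. \<forall>y. y \<noteq> 0 \<longrightarrow> (\<exists>n::nat. norm ((T ^^ n) x - y) \<le> \<delta> * norm y))"

end

theory Submission
  imports Defs
begin

text \<open>Fix \<open>\<epsilon> < \<theta> < \<delta>\<close>. For \<open>z \<noteq> 0\<close>, the set of vectors some iterate of which lies in the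
open ball \<open>B(z, \<theta>\<parallel>z\<parallel>)\<close> is open, and it is dense: next to any \<open>u \<in> D\<^sub>1\<close> lies
\<open>u + S\<^sub>k y\<^sub>k\<close>, where \<open>k\<close> is large with \<open>y\<^sub>k \<in> B(z, \<epsilon>\<parallel>z\<parallel>)\<close>, and its image under \<open>T\<^bsup>n(k)\<^esup>\<close>
is \<open>T\<^bsup>n(k)\<^esup>u + (T\<^bsup>n(k)\<^esup>S\<^sub>k y\<^sub>k - y\<^sub>k) + y\<^sub>k\<close>, within \<open>\<theta>\<parallel>z\<parallel>\<close> of \<open>z\<close>. By Baire's theorem one
vector lies in all these sets for \<open>z\<close> ranging over a countable dense set, and approximating
an arbitrary \<open>w \<noteq> 0\<close> by such \<open>z\<close> costs only the margin between \<open>\<theta>\<close> and \<open>\<delta>\<close>.\<close>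

lemma bounded_linear_funpow:
  fixes T :: "'a::real_normed_vector \<Rightarrow> 'a"
  assumes "bounded_linear T"
  shows "bounded_linear (T ^^ m)"
proof (induction m)
  case 0
  show ?case by (simp add: id_def)
next
  case (Suc m)
  then show ?case by (simp add: bounded_linear_compose assms)
qed

lemma dense_Inter_countable_open_dense:
  fixes \<G> :: "'a::complete_space set set"
  assumes "countable \<G>" and "\<And>G. G \<in> \<G> \<Longrightarrow> open G" and "\<And>G. G \<in> \<G> \<Longrightarrow> closure G = UNIV"
  shows "closure (\<Inter>\<G>) = UNIV"
proof -
  have "euclidean closure_of \<Inter>\<G> = topspace euclidean"
    by (rule Baire_category)
      (use assms completely_metrizable_space_euclidean in \<open>auto simp: euclidean_closure_of\<close>)
  then show ?thesis by (simp add: euclidean_closure_of)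
qed

definition orbit_visits_ball :: "('a::real_normed_vector \<Rightarrow> 'a) \<Rightarrow> real \<Rightarrow> 'a \<Rightarrow> 'a set" where
  "orbit_visits_ball T \<theta> z = (\<Union>m. (T ^^ m) -` ball z (\<theta> * norm z))"

lemma orbit_visits_ball_iff:
  "x \<in> orbit_visits_ball T \<theta> z \<longleftrightarrow> (\<exists>m. norm ((T ^^ m) x - z) < \<theta> * norm z)"
  by (auto simp: orbit_visits_ball_def dist_norm norm_minus_commute)

lemma open_orbit_visits_ball:
  assumes "bounded_linear T"
  shows "open (orbit_visits_ball T \<theta> z)"
  unfolding orbit_visits_ball_def
  by (intro open_UN ballI open_vimage open_ball linear_continuous_on bounded_linear_funpow assms)

lemma orbit_visits_ball_near:
  fixes T :: "'a::real_normed_vector \<Rightarrow> 'a"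
  assumes lin: "bounded_linear T" and "\<epsilon> < \<theta>" and "z \<noteq> 0" and "0 < r"
    and frequent: "infinite {k. y k \<in> cball z (\<epsilon> * norm z)}"
    and u_to_0: "((\<lambda>k. norm ((T ^^ n k) u)) \<longlongrightarrow> 0) sequentially"
    and S_to_0: "((\<lambda>k. norm (S k (y k))) \<longlongrightarrow> 0) sequentially"
    and TS_to_id: "((\<lambda>k. norm ((T ^^ n k) (S k (y k)) - y k)) \<longlongrightarrow> 0) sequentially"
  shows "\<exists>x \<in> orbit_visits_ball T \<theta> z. dist x u < r"
proof -
  define \<eta> where "\<eta> = (\<theta> - \<epsilon>) * norm z / 2"
  have "\<eta> > 0" using assms unfolding \<eta>_def by auto
  have "eventually (\<lambda>k. norm ((T ^^ n k) u) < \<eta> \<and> norm (S k (y k)) < r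
      \<and> norm ((T ^^ n k) (S k (y k)) - y k) < \<eta>) sequentially"
    using order_tendstoD(2)[OF u_to_0 \<open>\<eta> > 0\<close>] order_tendstoD(2)[OF S_to_0 \<open>0 < r\<close>]
      order_tendstoD(2)[OF TS_to_id \<open>\<eta> > 0\<close>]
    by (intro eventually_conj)
  then obtain N where N: "\<And>k. k \<ge> N \<Longrightarrow> norm ((T ^^ n k) u) < \<eta> \<and> norm (S k (y k)) < r
      \<and> norm ((T ^^ n k) (S k (y k)) - y k) < \<eta>"
    unfolding eventually_sequentially by blast
  obtain k where "k \<ge> N" and yk: "y k \<in> cball z (\<epsilon> * norm z)"
    using frequent unfolding infinite_nat_iff_unbounded_le by blast
  note small = N[OF \<open>k \<ge> N\<close>]
  define x where "x = u + S k (y k)"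
  have "(T ^^ n k) x - z = (T ^^ n k) u + ((T ^^ n k) (S k (y k)) - y k) + (y k - z)"
    using bounded_linear_funpow[OF lin] unfolding x_def by (simp add: linear_simps)
  then have "norm ((T ^^ n k) x - z)
      \<le> norm ((T ^^ n k) u) + norm ((T ^^ n k) (S k (y k)) - y k) + norm (y k - z)"
    by (metis norm_triangle_ineq order_trans add_right_mono)
  also have "\<dots> < \<eta> + \<eta> + \<epsilon> * norm z"
    using small yk by (simp add: dist_norm norm_minus_commute)
  also have "\<dots> = \<theta> * norm z" unfolding \<eta>_def by (simp add: field_simps)
  finally have "x \<in> orbit_visits_ball T \<theta> z" by (auto simp: orbit_visits_ball_iff)
  moreover have "dist x u < r" using small by (simp add: x_def dist_norm)
  ultimately show ?thesis by blast
qed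

lemma dense_orbit_visits_ball:
  fixes T :: "'a::real_normed_vector \<Rightarrow> 'a"
  assumes lin: "bounded_linear T" and "\<epsilon> < \<theta>" and "z \<noteq> 0"
    and dense: "closure D = UNIV"
    and frequent: "infinite {k. y k \<in> cball z (\<epsilon> * norm z)}"
    and D_to_0: "\<And>u. u \<in> D \<Longrightarrow> ((\<lambda>k. norm ((T ^^ n k) u)) \<longlongrightarrow> 0) sequentially"
    and S_to_0: "((\<lambda>k. norm (S k (y k))) \<longlongrightarrow> 0) sequentially"
    and TS_to_id: "((\<lambda>k. norm ((T ^^ n k) (S k (y k)) - y k)) \<longlongrightarrow> 0) sequentially"
  shows "closure (orbit_visits_ball T \<theta> z) = UNIV"
proof -
  have "v \<in> closure (orbit_visits_ball T \<theta> z)" for v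
  proof (unfold closure_approachable, intro allI impI)
    fix r :: real assume "r > 0"
    have "v \<in> closure D" using dense by simp
    then obtain u where "u \<in> D" and "dist u v < r / 2"
      using \<open>r > 0\<close> unfolding closure_approachable by (meson half_gt_zero)
    moreover obtain x where "x \<in> orbit_visits_ball T \<theta> z" and "dist x u < r / 2"
      using orbit_visits_ball_near[where n = n and S = S and y = y and u = u, OF lin \<open>\<epsilon> < \<theta>\<close> \<open>z \<noteq> 0\<close> _ frequent D_to_0[OF \<open>u \<in> D\<close>]
          S_to_0 TS_to_id] \<open>r > 0\<close>
      by (meson half_gt_zero)
    ultimately show "\<exists>x \<in> orbit_visits_ball T \<theta> z. dist x v < r"
      by (metis dist_triangle_half_r dist_commute)
  qed
  then show ?thesis by blast
qed

lemma delta_hypercyclic_if_approximates_dense: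
  fixes T :: "'a::real_normed_vector \<Rightarrow> 'a"
  assumes dense: "closure C = UNIV" and "0 \<le> \<theta>" and "\<theta> < \<delta>"
    and approx: "\<And>z. z \<in> C \<Longrightarrow> z \<noteq> 0 \<Longrightarrow> \<exists>m. norm ((T ^^ m) x - z) < \<theta> * norm z"
  shows "delta_hypercyclic \<delta> T"
  unfolding delta_hypercyclic_def
proof (rule exI[of _ x], intro allI impI)
  fix w :: 'a assume "w \<noteq> 0"
  define \<alpha> where "\<alpha> = min (1/2) ((\<delta> - \<theta>) / (\<theta> + 1))"
  have "0 < \<alpha>" "\<alpha> < 1" using assms unfolding \<alpha>_def by auto
  have "\<alpha> * (\<theta> + 1) \<le> (\<delta> - \<theta>) / (\<theta> + 1) * (\<theta> + 1)"
    using \<open>0 \<le> \<theta>\<close> unfolding \<alpha>_def by (intro mult_right_mono) auto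
  then have "\<alpha> * (\<theta> + 1) \<le> \<delta> - \<theta>" using \<open>0 \<le> \<theta>\<close> by simp
  have "w \<in> closure C" and "0 < \<alpha> * norm w"
    using dense \<open>0 < \<alpha>\<close> \<open>w \<noteq> 0\<close> by auto
  then obtain z where "z \<in> C" and zw: "norm (z - w) < \<alpha> * norm w"
    unfolding closure_approachable dist_norm by blast
  have "norm z \<le> (1 + \<alpha>) * norm w"
    using zw norm_triangle_ineq2[of z w] by (simp add: algebra_simps)
  have "z \<noteq> 0" using zw \<open>\<alpha> < 1\<close> \<open>w \<noteq> 0\<close> by auto
  then obtain m where m: "norm ((T ^^ m) x - z) < \<theta> * norm z"
    using approx \<open>z \<in> C\<close> by blast
  have "norm ((T ^^ m) x - w) \<le> norm ((T ^^ m) x - z) + norm (z - w)"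
    using norm_triangle_ineq[of "(T ^^ m) x - z" "z - w"] by simp
  also have "\<dots> \<le> \<theta> * ((1 + \<alpha>) * norm w) + \<alpha> * norm w"
    using m zw mult_left_mono[OF \<open>norm z \<le> (1 + \<alpha>) * norm w\<close> \<open>0 \<le> \<theta>\<close>] by linarith
  also have "\<dots> = \<theta> * norm w + \<alpha> * (\<theta> + 1) * norm w" by (simp add: algebra_simps)
  also have "\<dots> \<le> \<delta> * norm w"
    using mult_right_mono[OF \<open>\<alpha> * (\<theta> + 1) \<le> \<delta> - \<theta>\<close> norm_ge_zero[of w]]
    by (simp add: algebra_simps)
  finally show "\<exists>m. norm ((T ^^ m) x - w) \<le> \<delta> * norm w" by blast
qed

theorem theorem1p2:
  fixes T :: "'a::banach \<Rightarrow> 'a" and \<epsilon> :: real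
    and D1 D2 :: "'a set" and y :: "nat \<Rightarrow> 'a"
    and n :: "nat \<Rightarrow> nat" and S :: "nat \<Rightarrow> 'a \<Rightarrow> 'a"
  assumes sep: "separable_space (euclidean :: 'a topology)"
    and lin: "bounded_linear T"
    and eps: "0 < \<epsilon>" "\<epsilon> < 1"
    and dense: "closure D1 = UNIV"
    and enum: "D2 = range y"
    and inf_often: "\<And>x. x \<noteq> 0 \<Longrightarrow> infinite {k. y k \<in> cball x (\<epsilon> * norm x)}"
    and incr: "strict_mono n"
    and h1: "\<And>x. x \<in> D1 \<Longrightarrow> ((\<lambda>k. norm ((T ^^ n k) x)) \<longlongrightarrow> 0) sequentially"
    and h2: "((\<lambda>k. norm (S k (y k))) \<longlongrightarrow> 0) sequentially"
    and h3: "((\<lambda>k. norm ((T ^^ n k) (S k (y k)) - y k)) \<longlongrightarrow> 0) sequentially"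
  shows "\<forall>\<delta>>\<epsilon>. delta_hypercyclic \<delta> T"
proof (intro allI impI)
  fix \<delta> assume "\<epsilon> < \<delta>"
  define \<theta> where "\<theta> = (\<epsilon> + \<delta>) / 2"
  have "\<epsilon> < \<theta>" "0 \<le> \<theta>" "\<theta> < \<delta>" using \<open>\<epsilon> < \<delta>\<close> eps unfolding \<theta>_def by auto
  obtain C :: "'a set" where "countable C" and C_dense: "closure C = UNIV"
    using sep unfolding separable_space_def by (auto simp: euclidean_closure_of)
  let ?\<G> = "orbit_visits_ball T \<theta> ` (C - {0})"
  have "closure (orbit_visits_ball T \<theta> z) = UNIV" if "z \<noteq> 0" for z
    using dense_orbit_visits_ball[where n = n and S = S and y = y, OF lin \<open>\<epsilon> < \<theta>\<close> that dense inf_often[OF that] h1 h2 h3] .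
  then have "closure (\<Inter>?\<G>) = UNIV"
    using \<open>countable C\<close> open_orbit_visits_ball[OF lin]
    by (intro dense_Inter_countable_open_dense) auto
  then obtain x where "x \<in> \<Inter>?\<G>" by (metis closure_empty UNIV_not_empty ex_in_conv)
  then show "delta_hypercyclic \<delta> T"
    by (intro delta_hypercyclic_if_approximates_dense[OF C_dense \<open>0 \<le> \<theta>\<close> \<open>\<theta> < \<delta>\<close>])
      (auto simp: orbit_visits_ball_iff)
qed

end
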